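(* Let $\Omega=\bigcup_{j=1}^n (a_j,b_j)\subseteq\mathbb{R}$ be a finite union of bounded open intervals. Let $A\subseteq\mathbb{R}$ be a set with positive minimum gap $\delta$, i.e. $|a-a'|\ge\delta$ for all distinct $a,a'\in A$. Then there is a constant $C>0$, depending only on $\Omega$ and $\delta$, such that for every $R>0$, $$\sum_{a\in A,\ |a|>R} \left|\widehat{\chi_\Omega}(a)\right|^2 \le \frac{C}{R}.$$
   Context: $\chi_\Omega$ denotes the indicator function of $\Omega$, and the Fourier transform is $\widehat{f}(\xi)=\int_{\mathbb{R}} f(x)e^{-2\pi i x\xi}\,dx$. *)

theory Defs
  imports "HOL-Analysis.Analysis"
begin

definition indicator_fourier :: "real set \<Rightarrow> real \<Rightarrow> complex" where
  "indicator_fourier S \<xi> = integral S (\<lambda>x. cis (- 2 * pi * x * \<xi>))"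

end

theory Submission
  imports Defs
begin

text \<open>On each interval the Fourier integral is bounded both by the length of the interval and,
  integrating the exponential explicitly, by \<open>1 / (\<pi> \<bar>\<xi>\<bar>)\<close>; hence it is \<open>O(1 / (1 + \<bar>\<xi>\<bar>))\<close>.
  Inclusion--exclusion over the \<open>n\<close> intervals (whose pairwise intersections are again intervals)
  carries this decay over to \<open>\<Omega>\<close>, so \<open>\<bar>\<chi>\<^sub>\<Omega>^(\<xi>)\<bar>\<^sup>2 = O(1 / (1 + \<bar>\<xi>\<bar>)\<^sup>2)\<close>. Finally, the sum of \<open>1 / x\<^sup>2\<close> over a
  \<open>\<delta>\<close>-separated set of reals \<open>\<ge> m > 0\<close> is at most \<open>1 / m\<^sup>2 + 1 / (\<delta> m)\<close>: remove the least
  point \<open>x\<^sub>0\<close>, bound the rest inductively with \<open>m = x\<^sub>0 + \<delta>\<close>, and telescope using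
  \<open>1 / (x\<^sub>0 (x\<^sub>0 + \<delta>)) + 1 / (\<delta> (x\<^sub>0 + \<delta>)) = 1 / (\<delta> x\<^sub>0)\<close>. Applied with \<open>m \<approx> R\<close> on both
  half-lines this gives the bound \<open>O(1 / R)\<close>.\<close>

lemma integral_Un_Int:
  fixes f :: "'n::euclidean_space \<Rightarrow> 'a::banach"
  assumes "f integrable_on S" "f integrable_on T" "f integrable_on (S \<inter> T)"
  shows "integral (S \<union> T) f = integral S f + integral T f - integral (S \<inter> T) f"
proof -
  let ?r = "\<lambda>U x. if x \<in> U then f x else 0"
  have r: "?r S integrable_on UNIV" "?r T integrable_on UNIV" "?r (S \<inter> T) integrable_on UNIV"
    using assms integrable_restrict_UNIV by blast+
  have "?r (S \<union> T) = (\<lambda>x. ?r S x + ?r T x - ?r (S \<inter> T) x)"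
    by auto
  then have "integral (S \<union> T) f = integral UNIV (\<lambda>x. ?r S x + ?r T x - ?r (S \<inter> T) x)"
    by (metis integral_restrict_UNIV)
  also have "\<dots> = integral UNIV (?r S) + integral UNIV (?r T) - integral UNIV (?r (S \<inter> T))"
    using r by (simp add: integral_diff integral_add integrable_add)
  finally show ?thesis
    by (simp only: integral_restrict_UNIV)
qed

lemma fourier_kernel_integrable_on:
  assumes "S \<in> lmeasurable"
  shows "(\<lambda>x. cis (- 2 * pi * x * \<xi>)) integrable_on S"
proof -
  have "(\<lambda>x. cis (- 2 * pi * x * \<xi>)) absolutely_integrable_on S"
  proof (rule measurable_bounded_by_integrable_imp_absolutely_integrable[where g="\<lambda>_. 1"])
    show "(\<lambda>x. cis (- 2 * pi * x * \<xi>)) \<in> borel_measurable (lebesgue_on S)"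
      by (rule continuous_imp_measurable_on_sets_lebesgue)
        (auto intro!: continuous_intros fmeasurableD assms)
  qed (use assms in \<open>auto intro: fmeasurableD integrable_on_const\<close>)
  then show ?thesis
    using set_lebesgue_integral_eq_integral(1) by blast
qed

lemma indicator_fourier_Un:
  assumes "S \<in> lmeasurable" "T \<in> lmeasurable"
  shows "indicator_fourier (S \<union> T) \<xi> =
    indicator_fourier S \<xi> + indicator_fourier T \<xi> - indicator_fourier (S \<inter> T) \<xi>"
  unfolding indicator_fourier_def
  by (intro integral_Un_Int fourier_kernel_integrable_on assms fmeasurable.Int)

lemma norm_indicator_fourier_interval_le_length:
  assumes "\<alpha> \<le> \<beta>"
  shows "norm (indicator_fourier {\<alpha><..<\<beta>} \<xi>) \<le> \<beta> - \<alpha>"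
proof -
  have "((\<lambda>x. cis (- 2 * pi * x * \<xi>)) has_integral indicator_fourier {\<alpha>..\<beta>} \<xi>) {\<alpha>..\<beta>}"
    unfolding indicator_fourier_def by (intro integrable_integral fourier_kernel_integrable_on) auto
  from has_integral_bound_real[where S="{}" and B=1, OF _ _ this]
  have "norm (indicator_fourier {\<alpha>..\<beta>} \<xi>) \<le> \<beta> - \<alpha>"
    using assms by auto
  then show ?thesis
    by (simp add: indicator_fourier_def integral_open_interval_real)
qed

lemma norm_indicator_fourier_interval_le_inverse:
  assumes "\<alpha> \<le> \<beta>" "\<xi> \<noteq> 0"
  shows "norm (indicator_fourier {\<alpha><..<\<beta>} \<xi>) \<le> 1 / (pi * \<bar>\<xi>\<bar>)"
proof -
  define c where "c = - 2 * pi * \<xi>"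
  have "c \<noteq> 0"
    using assms by (simp add: c_def)
  define F where "F x = (- \<i> / of_real c) * cis (c * x)" for x
  have "(F has_vector_derivative cis (- 2 * pi * x * \<xi>)) (at x within {\<alpha>..\<beta>})" for x
  proof -
    have "((\<lambda>x. c * x) has_derivative (\<lambda>t. c * t)) (at x within {\<alpha>..\<beta>})"
      by (intro derivative_intros)
    from has_derivative_mult_right[OF has_derivative_cis[OF this], of "- \<i> / of_real c"]
    show ?thesis
      unfolding has_vector_derivative_def F_def
      by (rule has_derivative_eq_rhs)
        (use \<open>c \<noteq> 0\<close> in \<open>auto simp: c_def fun_eq_iff field_simps scaleR_conv_of_real mult_ac\<close>)
  qed
  then have "((\<lambda>x. cis (- 2 * pi * x * \<xi>)) has_integral (F \<beta> - F \<alpha>)) {\<alpha>..\<beta>}"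
    by (intro fundamental_theorem_of_calculus assms) auto
  then have "indicator_fourier {\<alpha><..<\<beta>} \<xi> = F \<beta> - F \<alpha>"
    by (simp add: indicator_fourier_def integral_open_interval_real[symmetric] integral_unique)
  also have "norm (F \<beta> - F \<alpha>) \<le> norm (F \<beta>) + norm (F \<alpha>)"
    by (rule norm_triangle_ineq4)
  also have "\<dots> = 1 / (pi * \<bar>\<xi>\<bar>)"
    by (simp add: F_def c_def norm_divide norm_mult abs_mult)
  finally show ?thesis .
qed

lemma norm_indicator_fourier_interval_le:
  assumes "\<beta> - \<alpha> \<le> D" "0 \<le> D"
  shows "norm (indicator_fourier {\<alpha><..<\<beta>} \<xi>) \<le> (1 + 2 * D) / (1 + \<bar>\<xi>\<bar>)"
proof (cases "\<alpha> \<le> \<beta>")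
  case False
  then show ?thesis
    using assms by (simp add: indicator_fourier_def)
next
  case True
  show ?thesis
  proof (cases "\<bar>\<xi>\<bar> \<le> 1")
    case True
    have "D * \<bar>\<xi>\<bar> \<le> D * 1"
      using True assms by (intro mult_left_mono) auto
    then have "D * (1 + \<bar>\<xi>\<bar>) \<le> 1 + 2 * D"
      using assms by (simp add: algebra_simps)
    then have "D \<le> (1 + 2 * D) / (1 + \<bar>\<xi>\<bar>)"
      by (simp add: field_simps)
    then show ?thesis
      using norm_indicator_fourier_interval_le_length[OF \<open>\<alpha> \<le> \<beta>\<close>, of \<xi>] assms by linarith
  next
    case False
    have "3 * \<bar>\<xi>\<bar> \<le> pi * \<bar>\<xi>\<bar>"
      using pi_gt3 by (intro mult_right_mono) auto
    then have "1 + \<bar>\<xi>\<bar> \<le> pi * \<bar>\<xi>\<bar>"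
      using False by linarith
    then have "1 / (pi * \<bar>\<xi>\<bar>) \<le> 1 / (1 + \<bar>\<xi>\<bar>)"
      by (intro divide_left_mono) auto
    also have "\<dots> \<le> (1 + 2 * D) / (1 + \<bar>\<xi>\<bar>)"
      using assms by (intro divide_right_mono) auto
    finally show ?thesis
      using norm_indicator_fourier_interval_le_inverse[OF \<open>\<alpha> \<le> \<beta>\<close>, of \<xi>] False by force
  qed
qed

lemma norm_indicator_fourier_intervals_le:
  fixes a b :: "nat \<Rightarrow> real"
  assumes "0 \<le> D" "\<forall>j<n. b j - a j \<le> D"
  shows "norm (indicator_fourier (\<Union>j<n. {a j<..<b j}) \<xi>) \<le> (2 ^ n - 1) * ((1 + 2 * D) / (1 + \<bar>\<xi>\<bar>))"
  using assms(2)
proof (induction n arbitrary: a b)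
  case 0
  then show ?case
    by (simp add: indicator_fourier_def)
next
  case (Suc n)
  let ?K = "(1 + 2 * D) / (1 + \<bar>\<xi>\<bar>)"
  let ?U = "\<Union>j<n. {a j<..<b j}" and ?I = "{a n<..<b n}"
  define a' where "a' j = max (a j) (a n)" for j
  define b' where "b' j = min (b j) (b n)" for j
  have "(\<Union>j<Suc n. {a j<..<b j}) = ?U \<union> ?I"
    by (auto simp: lessThan_Suc)
  moreover have "?U \<inter> ?I = (\<Union>j<n. {a' j<..<b' j})"
    by (auto simp: a'_def b'_def)
  moreover have "?U \<in> lmeasurable"
    by (intro fmeasurable.finite_UN) auto
  ultimately have "indicator_fourier (\<Union>j<Suc n. {a j<..<b j}) \<xi> =
      indicator_fourier ?U \<xi> + indicator_fourier ?I \<xi> - indicator_fourier (\<Union>j<n. {a' j<..<b' j}) \<xi>"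
    by (metis indicator_fourier_Un lmeasurable_interval(2))
  also have "norm \<dots> \<le> norm (indicator_fourier ?U \<xi>) + norm (indicator_fourier ?I \<xi>)
      + norm (indicator_fourier (\<Union>j<n. {a' j<..<b' j}) \<xi>)"
    by (smt (verit) norm_triangle_ineq norm_triangle_ineq4)
  also have "\<dots> \<le> (2 ^ n - 1) * ?K + ?K + (2 ^ n - 1) * ?K"
  proof (intro add_mono)
    show "norm (indicator_fourier ?U \<xi>) \<le> (2 ^ n - 1) * ?K"
      using Suc by auto
    show "norm (indicator_fourier ?I \<xi>) \<le> ?K"
      using Suc.prems assms(1) by (intro norm_indicator_fourier_interval_le) auto
    show "norm (indicator_fourier (\<Union>j<n. {a' j<..<b' j}) \<xi>) \<le> (2 ^ n - 1) * ?K"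
      using Suc.prems by (intro Suc.IH) (auto simp: a'_def b'_def)
  qed
  also have "\<dots> = (2 ^ Suc n - 1) * ?K"
    by (simp add: algebra_simps add_divide_distrib[symmetric])
  finally show ?case .
qed

lemma indicator_fourier_intervals_decay:
  fixes a b :: "nat \<Rightarrow> real"
  obtains K where "\<And>\<xi>. norm (indicator_fourier (\<Union>j<n. {a j<..<b j}) \<xi>) \<le> K / (1 + \<bar>\<xi>\<bar>)"
proof
  define D where "D = (\<Sum>j<n. \<bar>b j - a j\<bar>)"
  have "\<forall>j<n. b j - a j \<le> D"
    unfolding D_def by (smt (verit) finite_lessThan lessThan_iff member_le_sum abs_ge_zero)
  from norm_indicator_fourier_intervals_le[OF _ this]
  show "norm (indicator_fourier (\<Union>j<n. {a j<..<b j}) \<xi>) \<le> (2 ^ n - 1) * (1 + 2 * D) / (1 + \<bar>\<xi>\<bar>)"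
    for \<xi> by (simp add: D_def sum_nonneg)
qed

lemma sum_inverse_square_separated_le:
  fixes F :: "real set"
  assumes "finite F" "\<delta> > 0" "\<forall>x\<in>F. \<forall>y\<in>F. x \<noteq> y \<longrightarrow> \<delta> \<le> \<bar>x - y\<bar>"
    and "m > 0" "\<forall>x\<in>F. m \<le> x"
  shows "(\<Sum>x\<in>F. 1 / x\<^sup>2) \<le> 1 / m\<^sup>2 + 1 / (\<delta> * m)"
  using assms(1,3-)
proof (induction F arbitrary: m rule: finite_remove_induct)
  case empty
  then show ?case
    using assms(2) by auto
next
  case (remove F)
  define x0 where "x0 = Min F"
  have "x0 \<in> F" "m \<le> x0" "0 < x0"
    using remove by (auto simp: x0_def)
  have "\<forall>x\<in>F - {x0}. x0 + \<delta> \<le> x"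
    using remove.prems(1) \<open>x0 \<in> F\<close> remove.hyps(1) x0_def by force
  then have IH: "(\<Sum>x\<in>F - {x0}. 1 / x\<^sup>2) \<le> 1 / (x0 + \<delta>)\<^sup>2 + 1 / (\<delta> * (x0 + \<delta>))"
    using remove.prems(1) \<open>0 < x0\<close> assms(2) by (intro remove.IH[OF \<open>x0 \<in> F\<close>]) auto
  have "1 / (x0 + \<delta>)\<^sup>2 \<le> 1 / (x0 * (x0 + \<delta>))"
    using \<open>0 < x0\<close> assms(2)
    by (intro divide_left_mono) (auto simp: power2_eq_square intro!: mult_right_mono)
  moreover have "1 / (x0 * (x0 + \<delta>)) + 1 / (\<delta> * (x0 + \<delta>)) = 1 / (\<delta> * x0)"
    using \<open>0 < x0\<close> assms(2) by (simp add: divide_simps)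
  moreover have "1 / x0\<^sup>2 \<le> 1 / m\<^sup>2" "1 / (\<delta> * x0) \<le> 1 / (\<delta> * m)"
    using \<open>m \<le> x0\<close> remove.prems(2) assms(2)
    by (auto intro!: divide_left_mono power_mono mult_left_mono)
  moreover have "(\<Sum>x\<in>F. 1 / x\<^sup>2) = 1 / x0\<^sup>2 + (\<Sum>x\<in>F - {x0}. 1 / x\<^sup>2)"
    using remove.hyps \<open>x0 \<in> F\<close> by (simp add: sum.remove)
  ultimately show ?case
    using IH by linarith
qed

lemma sum_inverse_square_shifted_separated_le:
  fixes F :: "real set"
  assumes "finite F" "\<delta> > 0" "\<forall>x\<in>F. \<forall>y\<in>F. x \<noteq> y \<longrightarrow> \<delta> \<le> \<bar>x - y\<bar>"
    and "R > 0" "\<forall>x\<in>F. R < x"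
  shows "(\<Sum>x\<in>F. 1 / (1 + x)\<^sup>2) \<le> (1 + 1 / \<delta>) / R"
proof -
  have "(\<Sum>x\<in>F. 1 / (1 + x)\<^sup>2) = (\<Sum>y\<in>(+) 1 ` F. 1 / y\<^sup>2)"
    by (simp add: sum.reindex)
  also have "\<dots> \<le> 1 / (1 + R)\<^sup>2 + 1 / (\<delta> * (1 + R))"
    using assms by (intro sum_inverse_square_separated_le) auto
  also have "1 / (1 + R)\<^sup>2 \<le> 1 / R"
  proof (rule divide_left_mono)
    show "R \<le> (1 + R)\<^sup>2"
      using assms(4) by (simp add: power2_eq_square algebra_simps)
  qed (use assms(4) in auto)
  also have "1 / (\<delta> * (1 + R)) \<le> 1 / (\<delta> * R)"
    using assms(2,4) by (intro divide_left_mono mult_left_mono) auto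
  also have "1 / R + 1 / (\<delta> * R) = (1 + 1 / \<delta>) / R"
    by (simp add: add_divide_distrib)
  finally show ?thesis
    by simp
qed

lemma sum_inverse_square_abs_separated_le:
  fixes F :: "real set"
  assumes "finite F" "\<delta> > 0" "\<forall>x\<in>F. \<forall>y\<in>F. x \<noteq> y \<longrightarrow> \<delta> \<le> \<bar>x - y\<bar>"
    and "R > 0" "\<forall>x\<in>F. R < \<bar>x\<bar>"
  shows "(\<Sum>x\<in>F. 1 / (1 + \<bar>x\<bar>)\<^sup>2) \<le> 2 * (1 + 1 / \<delta>) / R"
proof -
  let ?P = "{x\<in>F. 0 < x}" and ?N = "{x\<in>F. x < 0}"
  have "F = ?P \<union> ?N"
    using assms(4,5) by force
  then have "(\<Sum>x\<in>F. 1 / (1 + \<bar>x\<bar>)\<^sup>2) = (\<Sum>x\<in>?P. 1 / (1 + \<bar>x\<bar>)\<^sup>2) + (\<Sum>x\<in>?N. 1 / (1 + \<bar>x\<bar>)\<^sup>2)"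
    using assms(1) by (metis (no_types, lifting) sum.union_disjoint finite_Un disjoint_iff mem_Collect_eq order.asym)
  also have "\<dots> = (\<Sum>x\<in>?P. 1 / (1 + x)\<^sup>2) + (\<Sum>x\<in>uminus ` ?N. 1 / (1 + x)\<^sup>2)"
    by (simp add: sum.reindex)
  also have "\<dots> \<le> (1 + 1 / \<delta>) / R + (1 + 1 / \<delta>) / R"
    using assms by (intro add_mono sum_inverse_square_shifted_separated_le) force+
  finally show ?thesis
    by simp
qed

lemma separated_decaying_summable_on:
  fixes g :: "real \<Rightarrow> real"
  assumes "\<delta> > 0" "R > 0" "\<forall>x\<in>A. \<forall>y\<in>A. x \<noteq> y \<longrightarrow> \<delta> \<le> \<bar>x - y\<bar>"
    and "\<And>\<xi>. 0 \<le> g \<xi>" "\<And>\<xi>. g \<xi> \<le> c / (1 + \<bar>\<xi>\<bar>)\<^sup>2"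
  shows "g summable_on {\<xi>\<in>A. \<bar>\<xi>\<bar> > R}"
    and "(\<Sum>\<^sub>\<infinity>\<xi>\<in>{\<xi>\<in>A. \<bar>\<xi>\<bar> > R}. g \<xi>) \<le> 2 * c * (1 + 1 / \<delta>) / R"
proof -
  have "0 \<le> c"
    using assms(4,5)[of 0] by simp
  have finite_sums: "sum g F \<le> 2 * c * (1 + 1 / \<delta>) / R"
    if "finite F" "F \<subseteq> {\<xi>\<in>A. \<bar>\<xi>\<bar> > R}" for F
  proof -
    have "sum g F \<le> c * (\<Sum>x\<in>F. 1 / (1 + \<bar>x\<bar>)\<^sup>2)"
      unfolding sum_distrib_left by (intro sum_mono) (simp add: assms(5))
    also have "\<dots> \<le> c * (2 * (1 + 1 / \<delta>) / R)"
      using that assms(1-3) \<open>0 \<le> c\<close>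
      by (intro mult_left_mono sum_inverse_square_abs_separated_le) (auto dest: subsetD)
    finally show ?thesis
      by (simp add: algebra_simps)
  qed
  show summable: "g summable_on {\<xi>\<in>A. \<bar>\<xi>\<bar> > R}"
    using assms(4) finite_sums by (intro nonneg_bdd_above_summable_on bdd_aboveI) auto
  show "(\<Sum>\<^sub>\<infinity>\<xi>\<in>{\<xi>\<in>A. \<bar>\<xi>\<bar> > R}. g \<xi>) \<le> 2 * c * (1 + 1 / \<delta>) / R"
    using finite_sums by (intro infsum_le_finite_sums[OF summable]) auto
qed

theorem lemma1:
  fixes n :: nat and a b :: "nat \<Rightarrow> real" and \<delta> :: real
  assumes "\<delta> > 0"
  shows "\<exists>C>0. \<forall>A :: real set.
           (\<forall>x\<in>A. \<forall>y\<in>A. x \<noteq> y \<longrightarrow> \<bar>x - y\<bar> \<ge> \<delta>) \<longrightarrow>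
           (\<forall>R>0.
              (\<lambda>\<xi>. (cmod (indicator_fourier (\<Union>j<n. {a j<..<b j}) \<xi>))\<^sup>2)
                summable_on {\<xi>\<in>A. \<bar>\<xi>\<bar> > R} \<and>
              (\<Sum>\<^sub>\<infinity>\<xi>\<in>{\<xi>\<in>A. \<bar>\<xi>\<bar> > R}.
                 (cmod (indicator_fourier (\<Union>j<n. {a j<..<b j}) \<xi>))\<^sup>2) \<le> C / R)"
proof -
  obtain K where K: "\<And>\<xi>. cmod (indicator_fourier (\<Union>j<n. {a j<..<b j}) \<xi>) \<le> K / (1 + \<bar>\<xi>\<bar>)"
    using indicator_fourier_intervals_decay by blast
  have decay: "(cmod (indicator_fourier (\<Union>j<n. {a j<..<b j}) \<xi>))\<^sup>2 \<le> K\<^sup>2 / (1 + \<bar>\<xi>\<bar>)\<^sup>2" for \<xi>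
    using power_mono[OF K[of \<xi>] norm_ge_zero, of 2] by (simp add: power_divide)
  define C where "C = 2 * K\<^sup>2 * (1 + 1 / \<delta>) + 1"
  have "0 \<le> 2 * K\<^sup>2 * (1 + 1 / \<delta>)"
    using assms by simp
  then have "C > 0"
    unfolding C_def by linarith
  moreover have "2 * K\<^sup>2 * (1 + 1 / \<delta>) / R \<le> C / R" if "R > 0" for R
    using that by (intro divide_right_mono) (auto simp: C_def)
  ultimately show ?thesis
    using separated_decaying_summable_on[OF assms _ _ _ decay] by (meson norm_ge_zero order_trans zero_le_power2)
qed

end
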